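(* Let $(\mathbf{x}_i,y_i)_{i=1}^n\subset\mathbb{R}^d\times\{\pm1\}$, $\mathbf{z}_i:=y_i\mathbf{x}_i$, $\bar{\mathbf{z}}:=\frac1n\sum_i\mathbf{z}_i$, and suppose there are $r>0$ and $0<q<1$ with $\frac1n|\{i:\mathbf{z}_i^\top\bar{\mathbf{z}}<-r\}|\ge q$. Let $L(\mathbf{w})=\frac1n\sum_i\ln(1+\exp(-\mathbf{z}_i^\top\mathbf{w}))$ and let $\mathbf{w}_1=\mathbf{w}_0-\eta\nabla L(\mathbf{w}_0)$ with $\mathbf{w}_0=0$, $\eta>0$. If $L(\mathbf{w}_1)\le L(\mathbf{w}_0)$, then $\eta\le\frac{2\ln2}{rq}$. *)

theory Defs
  imports "HOL-Analysis.Analysis"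
begin

definition logistic_loss :: "nat \<Rightarrow> (nat \<Rightarrow> 'a::real_inner) \<Rightarrow> 'a \<Rightarrow> real" where
  "logistic_loss n z w = (1 / real n) * (\<Sum>i<n. ln (1 + exp (- (z i \<bullet> w))))"

end

theory Submission
  imports Defs
begin

text \<open>At \<open>w = 0\<close> the sigmoid weight \<open>1 / (1 + exp (z\<^sub>i \<bullet> w))\<close> of every sample is \<open>1/2\<close>, so the first gradient step is
  \<open>w\<^sub>1 = (\<eta>/2) z\<^sub>m\<close> with \<open>z\<^sub>m\<close> the mean of the \<open>z\<^sub>i\<close>, and \<open>L(w\<^sub>0) = ln 2\<close>. On the
  \<open>q n\<close> samples with \<open>z\<^sub>i \<bullet> z\<^sub>m < -r\<close> the margin at \<open>w\<^sub>1\<close> is below \<open>-\<eta> r / 2\<close>, and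
  \<open>ln (1 + exp t) > t\<close> turns each of them into a loss of more than \<open>\<eta> r / 2\<close>; all other
  terms are positive. Hence \<open>q \<eta> r / 2 < L(w\<^sub>1) \<le> ln 2\<close>.\<close>

lemma GDERIV_unique:
  fixes f :: "'a::real_inner \<Rightarrow> real"
  assumes "GDERIV f x :> D" and "GDERIV f x :> D'"
  shows "D = D'"
proof -
  have "(\<lambda>h. h \<bullet> D) = (\<lambda>h. h \<bullet> D')"
    using assms unfolding gderiv_def by (rule has_derivative_unique)
  then have "(D - D') \<bullet> D = (D - D') \<bullet> D'"
    by (rule fun_cong)
  then have "(D - D') \<bullet> (D - D') = 0"
    by (simp add: inner_diff_right)
  then show ?thesis
    by simp
qed

lemma GDERIV_logistic_loss:
  fixes z :: "nat \<Rightarrow> 'a::real_inner"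
  shows "GDERIV (logistic_loss n z) w :>
           - (1 / real n) *\<^sub>R (\<Sum>i<n. (1 / (1 + exp (z i \<bullet> w))) *\<^sub>R z i)"
  unfolding gderiv_def logistic_loss_def[abs_def]
proof (rule has_derivative_eq_rhs)
  show "((\<lambda>w. 1 / real n * (\<Sum>i<n. ln (1 + exp (- (z i \<bullet> w))))) has_derivative
          (\<lambda>h. (1 / real n) * (\<Sum>i<n. (1 / (1 + exp (- (z i \<bullet> w)))) * (exp (- (z i \<bullet> w)) * - (z i \<bullet> h)))))
        (at w)"
    by (intro has_derivative_mult_right has_derivative_sum)
       (auto intro!: derivative_eq_intros simp: add_pos_pos field_simps)
  have "exp (- t) * a / (1 + exp (- t)) = a / (1 + exp t)" for t a :: real
    by (simp add: exp_minus field_simps add_pos_pos)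
  then show "(\<lambda>h. (1 / real n) * (\<Sum>i<n. (1 / (1 + exp (- (z i \<bullet> w)))) * (exp (- (z i \<bullet> w)) * - (z i \<bullet> h)))) =
    (\<lambda>h. h \<bullet> - (1 / real n) *\<^sub>R (\<Sum>i<n. (1 / (1 + exp (z i \<bullet> w))) *\<^sub>R z i))"
    by (simp add: fun_eq_iff inner_sum_right sum_negf inner_commute)
qed

lemma ln_one_plus_exp_gt: "(t::real) < ln (1 + exp t)"
proof -
  have "ln (exp t) < ln (1 + exp t)"
    by (subst ln_less_cancel_iff) (auto simp: add_pos_pos)
  then show ?thesis
    by simp
qed

lemma logistic_loss_zero:
  assumes "0 < n"
  shows "logistic_loss n z 0 = ln 2"
  using assms by (simp add: logistic_loss_def)

lemma logistic_loss_ge_card_margin_violations: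
  fixes z :: "nat \<Rightarrow> 'a::real_inner"
  assumes S: "S \<subseteq> {..<n}" and violated: "\<And>i. i \<in> S \<Longrightarrow> z i \<bullet> w \<le> - t"
  shows "real (card S) * t / real n \<le> logistic_loss n z w"
proof -
  let ?l = "\<lambda>i. ln (1 + exp (- (z i \<bullet> w)))"
  have "real (card S) * t = (\<Sum>i\<in>S. t)"
    by simp
  also have "\<dots> \<le> (\<Sum>i\<in>S. ?l i)"
  proof (rule sum_mono)
    fix i
    assume "i \<in> S"
    then show "t \<le> ?l i"
      using violated ln_one_plus_exp_gt[of "- (z i \<bullet> w)"] by fastforce
  qed
  also have "\<dots> \<le> (\<Sum>i<n. ?l i)"
    using S by (intro sum_mono2) auto
  finally show ?thesis
    by (simp add: logistic_loss_def divide_right_mono)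
qed

theorem mainTheorem15:
  fixes x :: "nat \<Rightarrow> 'a::euclidean_space" and y :: "nat \<Rightarrow> real"
    and n :: nat and r q \<eta> :: real and g :: 'a
  assumes n_pos: "0 < n"
    and labels: "\<forall>i<n. y i = 1 \<or> y i = -1"
    and r_pos: "0 < r" and q_pos: "0 < q" and q_lt1: "q < 1"
    and frac: "real (card {i. i < n \<and>
                 (y i *\<^sub>R x i) \<bullet> ((1 / real n) *\<^sub>R (\<Sum>j<n. y j *\<^sub>R x j)) < - r}) / real n \<ge> q"
    and eta_pos: "0 < \<eta>"
    and grad: "GDERIV (logistic_loss n (\<lambda>i. y i *\<^sub>R x i)) 0 :> g"
    and descent: "logistic_loss n (\<lambda>i. y i *\<^sub>R x i) (0 - \<eta> *\<^sub>R g)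
                    \<le> logistic_loss n (\<lambda>i. y i *\<^sub>R x i) 0"
  shows "\<eta> \<le> 2 * ln 2 / (r * q)"
proof -
  define z where "z = (\<lambda>i. y i *\<^sub>R x i)"
  define m where "m = (1 / real n) *\<^sub>R (\<Sum>j<n. z j)"
  define S where "S = {i. i < n \<and> z i \<bullet> m < - r}"
  have "g = - (1 / 2) *\<^sub>R m"
    using GDERIV_unique[OF grad[folded z_def] GDERIV_logistic_loss[of n z 0]]
    by (simp add: m_def scaleR_sum_right[symmetric])
  then have step: "0 - \<eta> *\<^sub>R g = (\<eta> / 2) *\<^sub>R m"
    by simp
  have "z i \<bullet> ((\<eta> / 2) *\<^sub>R m) \<le> - (\<eta> * r / 2)" if "i \<in> S" for i
    using that eta_pos mult_left_mono[of "z i \<bullet> m" "- r" \<eta>] by (simp add: S_def)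
  then have "real (card S) * (\<eta> * r / 2) / real n \<le> logistic_loss n z (0 - \<eta> *\<^sub>R g)"
    unfolding step by (intro logistic_loss_ge_card_margin_violations) (auto simp: S_def)
  also have "\<dots> \<le> ln 2"
    using descent by (simp add: z_def logistic_loss_zero[OF n_pos])
  finally have bound: "real (card S) / real n * (\<eta> * r / 2) \<le> ln 2"
    by simp
  have "q \<le> real (card S) / real n"
    using frac by (simp add: S_def z_def m_def)
  then have "q * (\<eta> * r / 2) \<le> ln 2"
    using eta_pos r_pos bound by (meson mult_right_mono order.trans half_gt_zero less_imp_le mult_pos_pos)
  then show ?thesis
    using r_pos q_pos by (simp add: field_simps)
qed

end
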